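(* Let $\mathcal H$ be a real Hilbert space, let $A_1:\mathcal H\to\mathcal H$ be $\beta$-cocoercive for some $\beta>0$, let $A_2:\mathcal H\to\mathcal H$ be maximally monotone and uniformly continuous, let $B:\mathcal H\rightrightarrows\mathcal H$ be maximally monotone, set $A:=A_1+A_2$, and assume $\operatorname{zer}(A+B)\neq\emptyset$. Let $\theta,\delta\in(0,1)$, $x^k\in\mathcal H$ and $\alpha_{k-1}>0$, and for $j\in\mathbb N$ put $\bar x^k_j:=J_{\alpha_{k-1}\theta^jB}(x^k-\alpha_{k-1}\theta^jAx^k)$. Then there exists $j\in\mathbb N$ (hence a smallest one) such that $$\alpha_{k-1}\theta^j\langle A_2x^k-A_2\bar x^k_j,\,x^k-\bar x^k_j\rangle\le\delta\|x^k-\bar x^k_j\|^2,$$ i.e., the backtracking inequality holds after finitely many steps.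
   Context: $\langle\cdot,\cdot\rangle$ and $\|\cdot\|$ are the inner product and norm of $\mathcal H$; $\mathbb N=\{0,1,2,\dots\}$. $A_1$ is $\beta$-cocoercive means $\langle A_1x-A_1y,x-y\rangle\ge\beta\|A_1x-A_1y\|^2$ for all $x,y\in\mathcal H$. $\operatorname{zer}(A+B):=\{x\in\mathcal H: 0\in Ax+Bx\}$. For $\alpha>0$, $J_{\alpha B}:=(I+\alpha B)^{-1}$ is the resolvent of $B$ (single-valued with full domain). *)

theory Defs
  imports "HOL-Analysis.Analysis"
begin

text \<open>Set-valued operators on a real Hilbert space are modelled as functions
  'a \<Rightarrow> 'a set (the image of x is B x; the graph is {(x,u). u \<in> B x}).\<close>

definition monotone_op :: "('a::real_inner \<Rightarrow> 'a set) \<Rightarrow> bool" where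
  "monotone_op B \<longleftrightarrow> (\<forall>x y u v. u \<in> B x \<longrightarrow> v \<in> B y \<longrightarrow> inner (u - v) (x - y) \<ge> 0)"

definition maximal_monotone :: "('a::real_inner \<Rightarrow> 'a set) \<Rightarrow> bool" where
  "maximal_monotone B \<longleftrightarrow> monotone_op B \<and>
     (\<forall>C. monotone_op C \<longrightarrow> (\<forall>x. B x \<subseteq> C x) \<longrightarrow> C = B)"

definition cocoercive :: "real \<Rightarrow> ('a::real_inner \<Rightarrow> 'a) \<Rightarrow> bool" where
  "cocoercive \<beta> T \<longleftrightarrow> (\<forall>x y. inner (T x - T y) (x - y) \<ge> \<beta> * (norm (T x - T y))\<^sup>2)"

definition zer :: "('a::real_vector \<Rightarrow> 'a) \<Rightarrow> ('a \<Rightarrow> 'a set) \<Rightarrow> 'a set" where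
  "zer A B = {x. 0 \<in> (\<lambda>u. A x + u) ` B x}"

text \<open>Resolvent J_{\<alpha>B} = (I + \<alpha>B)^{-1}: J y is the (unique, for maximally monotone B
  and \<alpha> > 0) point x with y \<in> x + \<alpha> B x.\<close>
definition resolvent :: "real \<Rightarrow> ('a::real_vector \<Rightarrow> 'a set) \<Rightarrow> 'a \<Rightarrow> 'a" where
  "resolvent \<alpha> B y = (THE x. y \<in> (\<lambda>u. x + \<alpha> *\<^sub>R u) ` B x)"

end

theory Submission
  imports Defs
begin

(* If the inequality failed for every j, the trial points x_j := J_{g_j B}(x - g_j A x) with
   g_j := alpha theta^j -> 0 would satisfy delta |x - x_j| < g_j |A2 x - A2 x_j| (Cauchy-Schwarz).
   A uniformly continuous map grows at most affinely, so this forces x_j -> x, and then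
   (x - x_j) / g_j -> 0 by continuity of A2. Since (x - x_j) / g_j - A x lies in B x_j and the
   graph of a maximally monotone operator is sequentially closed, -A x is in B x; hence x_0 = x,
   for which the inequality holds trivially.

   Resolvents are defined everywhere by Minty's theorem, which follows from a minimization
   argument: on the convex hull of the lifted graph {(y, v, <y,v>) | v in M y}, monotonicity
   gives r >= <a,b>, so the energy r + |(a - b)/2|^2 is nonnegative there; along a minimizing
   sequence (a - b)/2 is Cauchy by the parallelogram law, and its limit w satisfies -w in M w. *)

lemma monotone_opD:
  "monotone_op B \<Longrightarrow> u \<in> B x \<Longrightarrow> v \<in> B y \<Longrightarrow> 0 \<le> inner (u - v) (x - y)"
  by (simp add: monotone_op_def)

lemma maximal_monotone_iff:
  fixes B :: "'a::real_inner \<Rightarrow> 'a set"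
  shows "maximal_monotone B \<longleftrightarrow> monotone_op B \<and>
    (\<forall>x u. (\<forall>y v. v \<in> B y \<longrightarrow> 0 \<le> inner (u - v) (x - y)) \<longrightarrow> u \<in> B x)"
    (is "_ \<longleftrightarrow> _ \<and> ?closed")
proof
  assume max: "maximal_monotone B"
  then have mono: "monotone_op B" by (simp add: maximal_monotone_def)
  have "u \<in> B x" if rel: "\<forall>y v. v \<in> B y \<longrightarrow> 0 \<le> inner (u - v) (x - y)" for x u
  proof -
    define C where "C = B(x := insert u (B x))"
    have graph_C: "v \<in> C y \<longleftrightarrow> v \<in> B y \<or> (y = x \<and> v = u)" for y v
      by (auto simp: C_def)
    have "inner (v - u) (y - x) = inner (u - v) (x - y)" for y v
      by (metis inner_minus_left inner_minus_right minus_diff_eq)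
    then have "monotone_op C"
      using rel mono by (auto simp: monotone_op_def graph_C)
    moreover have "\<forall>y. B y \<subseteq> C y" by (auto simp: graph_C)
    ultimately have "C = B" using max by (simp add: maximal_monotone_def)
    then show ?thesis by (metis graph_C)
  qed
  with mono show "monotone_op B \<and> ?closed" by blast
next
  assume "monotone_op B \<and> ?closed"
  then have mono: "monotone_op B" and closed: ?closed by auto
  show "maximal_monotone B"
    unfolding maximal_monotone_def
  proof (intro conjI allI impI mono)
    fix C assume "monotone_op C" and sub: "\<forall>x. B x \<subseteq> C x"
    then have "C x \<subseteq> B x" for x
      using closed unfolding monotone_op_def by blast
    with sub show "C = B" by (intro ext equalityI) auto
  qed
qed

lemma maximal_monotone_imp_monotone_op: "maximal_monotone B \<Longrightarrow> monotone_op B"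
  by (simp add: maximal_monotone_def)

lemma maximal_monotone_memI:
  fixes B :: "'a::real_inner \<Rightarrow> 'a set"
  assumes "maximal_monotone B" and "\<And>y v. v \<in> B y \<Longrightarrow> 0 \<le> inner (u - v) (x - y)"
  shows "u \<in> B x"
  using assms by (simp add: maximal_monotone_iff)

lemma maximal_monotone_closed_graph:
  fixes B :: "'a::real_inner \<Rightarrow> 'a set"
  assumes max: "maximal_monotone B" and graph: "\<And>n. u n \<in> B (x n)"
    and "x \<longlonglongrightarrow> x0" and "u \<longlonglongrightarrow> u0"
  shows "u0 \<in> B x0"
proof (rule maximal_monotone_memI[OF max])
  fix y v assume "v \<in> B y"
  then have "\<forall>n. 0 \<le> inner (u n - v) (x n - y)"
    using max graph by (blast intro: monotone_opD maximal_monotone_imp_monotone_op)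
  moreover have "(\<lambda>n. inner (u n - v) (x n - y)) \<longlonglongrightarrow> inner (u0 - v) (x0 - y)"
    by (intro tendsto_intros assms)
  ultimately show "0 \<le> inner (u0 - v) (x0 - y)"
    by (blast intro: LIMSEQ_le_const)
qed

lemma maximal_monotone_translate_scale:
  fixes B :: "'a::real_inner \<Rightarrow> 'a set"
  assumes max: "maximal_monotone B" and "0 < l"
  shows "maximal_monotone (\<lambda>z. (*\<^sub>R) l ` B (z + y))"
  unfolding maximal_monotone_iff
proof (intro conjI allI impI)
  show "monotone_op (\<lambda>z. (*\<^sub>R) l ` B (z + y))"
    unfolding monotone_op_def
  proof clarify
    fix x1 x2 u1 u2 assume "u1 \<in> B (x1 + y)" "u2 \<in> B (x2 + y)"
    then have "0 \<le> inner (u1 - u2) ((x1 + y) - (x2 + y))"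
      using max by (blast intro: monotone_opD maximal_monotone_imp_monotone_op)
    then show "0 \<le> inner (l *\<^sub>R u1 - l *\<^sub>R u2) (x1 - x2)"
      using \<open>0 < l\<close> by (simp add: scaleR_diff_right[symmetric])
  qed
next
  fix x w assume rel: "\<forall>z v. v \<in> (*\<^sub>R) l ` B (z + y) \<longrightarrow> 0 \<le> inner (w - v) (x - z)"
  have "(1 / l) *\<^sub>R w \<in> B (x + y)"
  proof (rule maximal_monotone_memI[OF max])
    fix z v assume "v \<in> B z"
    then have "0 \<le> inner (w - l *\<^sub>R v) (x - (z - y))"
      using rel by force
    moreover have "inner ((1 / l) *\<^sub>R w - v) (x + y - z) = inner (w - l *\<^sub>R v) (x - (z - y)) / l"
      using \<open>0 < l\<close> by (simp add: inner_diff_left inner_diff_right field_simps)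
    ultimately show "0 \<le> inner ((1 / l) *\<^sub>R w - v) (x + y - z)"
      using \<open>0 < l\<close> by simp
  qed
  then show "w \<in> (*\<^sub>R) l ` B (x + y)"
    using \<open>0 < l\<close> by (auto intro!: image_eqI[of _ _ "(1 / l) *\<^sub>R w"])
qed

definition quadratic_energy :: "'a::real_normed_vector \<times> real \<Rightarrow> real" where
  "quadratic_energy p = snd p + (norm (fst p))\<^sup>2"

lemma quadratic_energy_midpoint:
  fixes p q :: "'a::real_inner \<times> real"
  shows "quadratic_energy ((1 / 2) *\<^sub>R p + (1 / 2) *\<^sub>R q) =
    (quadratic_energy p + quadratic_energy q) / 2 - (norm (fst p - fst q))\<^sup>2 / 4"
proof -
  have "(norm ((1 / 2) *\<^sub>R (fst p + fst q)))\<^sup>2 =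
      ((norm (fst p))\<^sup>2 + (norm (fst q))\<^sup>2) / 2 - (norm (fst p - fst q))\<^sup>2 / 4"
    unfolding power2_norm_eq_inner
    by (simp add: inner_add_left inner_add_right inner_diff_left inner_diff_right inner_commute
        field_simps)
  then show ?thesis
    by (simp add: quadratic_energy_def scaleR_right_distrib field_simps)
qed

lemma quadratic_energy_convex_comb:
  fixes p q :: "'a::real_inner \<times> real"
  shows "quadratic_energy ((1 - t) *\<^sub>R p + t *\<^sub>R q) =
    (1 - t) * snd p + t * snd q + (norm (fst p))\<^sup>2 + 2 * t * inner (fst p) (fst q - fst p)
      + t\<^sup>2 * (norm (fst q - fst p))\<^sup>2"
  unfolding quadratic_energy_def power2_norm_eq_inner
  by (simp add: inner_add_left inner_add_right inner_diff_left inner_diff_right inner_commute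
      algebra_simps power2_eq_square)

lemma nonneg_on_convex_hull_symmetric:
  fixes h :: "'v::real_vector \<Rightarrow> 'v \<Rightarrow> real"
  assumes sym: "\<And>p q. h p q = h q p"
    and convex: "\<And>q. convex {p. 0 \<le> h p q}"
    and nonneg: "\<And>p q. p \<in> G \<Longrightarrow> q \<in> G \<Longrightarrow> 0 \<le> h p q"
    and "p \<in> convex hull G" and "q \<in> convex hull G"
  shows "0 \<le> h p q"
proof -
  have hull_G: "convex hull G \<subseteq> {p. 0 \<le> h p q}" if "q \<in> G" for q
    using nonneg that by (intro hull_minimal convex) auto
  have "G \<subseteq> {q. 0 \<le> h q p}"
  proof
    fix q assume "q \<in> G"
    then have "0 \<le> h p q"
      using hull_G \<open>p \<in> convex hull G\<close> by blast
    then show "q \<in> {q. 0 \<le> h q p}"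
      by (simp add: sym[of q p])
  qed
  then have "convex hull G \<subseteq> {q. 0 \<le> h q p}"
    by (intro hull_minimal convex)
  then show ?thesis
    using \<open>q \<in> convex hull G\<close> sym[of p q] by auto
qed

lemma real_Inf_as_limit:
  fixes A :: "real set"
  assumes "A \<noteq> {}" and "bdd_below A"
  obtains u where "\<And>n. u n \<in> A" and "u \<longlonglongrightarrow> Inf A"
proof -
  have "\<exists>a\<in>A. a < Inf A + inverse (real (Suc n))" for n
    using cInf_lessD[OF \<open>A \<noteq> {}\<close>] by simp
  then obtain u where u: "\<And>n. u n \<in> A" "\<And>n. u n < Inf A + inverse (real (Suc n))"
    by metis
  have "u \<longlonglongrightarrow> Inf A"
  proof (rule tendsto_sandwich[OF _ _ tendsto_const LIMSEQ_inverse_real_of_nat_add])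
    show "\<forall>\<^sub>F n in sequentially. Inf A \<le> u n"
      using u(1) \<open>bdd_below A\<close> by (simp add: cInf_lower)
    show "\<forall>\<^sub>F n in sequentially. u n \<le> Inf A + inverse (real (Suc n))"
      using u(2) by (simp add: less_imp_le)
  qed
  with u(1) show thesis by (rule that)
qed

lemma quadratic_energy_minimizing_sequence_Cauchy:
  fixes C :: "('a::real_inner \<times> real) set"
  assumes "convex C" and bdd: "bdd_below (quadratic_energy ` C)" and c: "\<And>n. c n \<in> C"
    and energy_lim: "(\<lambda>n. quadratic_energy (c n)) \<longlonglongrightarrow> Inf (quadratic_energy ` C)"
  shows "Cauchy (\<lambda>n. fst (c n))"
proof (rule metric_CauchyI)
  fix e :: real assume "0 < e"
  define m where "m = Inf (quadratic_energy ` C)"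
  have excess:
    "(norm (fst p - fst q))\<^sup>2 \<le> 2 * (quadratic_energy p - m) + 2 * (quadratic_energy q - m)"
    if "p \<in> C" "q \<in> C" for p q
  proof -
    have "(1 / 2) *\<^sub>R p + (1 / 2) *\<^sub>R q \<in> C"
      using \<open>convex C\<close> that by (intro convexD) auto
    then have "m \<le> quadratic_energy ((1 / 2) *\<^sub>R p + (1 / 2) *\<^sub>R q)"
      unfolding m_def using bdd by (simp add: cInf_lower)
    then show ?thesis
      unfolding quadratic_energy_midpoint by (simp add: field_simps)
  qed
  have "\<forall>\<^sub>F n in sequentially. quadratic_energy (c n) < m + e\<^sup>2 / 4"
    using order_tendstoD(2)[OF energy_lim] \<open>0 < e\<close> by (simp add: m_def)
  then obtain N where N: "\<And>n. N \<le> n \<Longrightarrow> quadratic_energy (c n) < m + e\<^sup>2 / 4"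
    by (auto simp: eventually_sequentially)
  have "dist (fst (c i)) (fst (c j)) < e" if "N \<le> i" "N \<le> j" for i j
  proof -
    have "(norm (fst (c i) - fst (c j)))\<^sup>2 < e\<^sup>2"
      using excess[OF c c, of i j] N[OF that(1)] N[OF that(2)] by argo
    then show ?thesis
      using \<open>0 < e\<close> by (simp add: dist_norm power_less_imp_less_base)
  qed
  then show "\<exists>N. \<forall>i\<ge>N. \<forall>j\<ge>N. dist (fst (c i)) (fst (c j)) < e" by blast
qed

lemma quadratic_energy_minimizing_sequence_converges:
  fixes C :: "('a::{real_inner,complete_space} \<times> real) set"
  assumes "convex C" and "C \<noteq> {}" and bdd: "bdd_below (quadratic_energy ` C)"
  obtains c w0 where "\<And>n. c n \<in> C" and "(\<lambda>n. fst (c n)) \<longlonglongrightarrow> w0"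
    and "(\<lambda>n. snd (c n)) \<longlonglongrightarrow> Inf (quadratic_energy ` C) - (norm w0)\<^sup>2"
proof -
  from \<open>C \<noteq> {}\<close> have "quadratic_energy ` C \<noteq> {}" by simp
  then obtain u where u: "\<And>n. u n \<in> quadratic_energy ` C"
    and "u \<longlonglongrightarrow> Inf (quadratic_energy ` C)"
    using real_Inf_as_limit bdd by metis
  have "\<forall>n. \<exists>p. p \<in> C \<and> u n = quadratic_energy p"
    using u by blast
  then obtain c where c: "\<And>n. c n \<in> C" and u_eq: "\<And>n. u n = quadratic_energy (c n)"
    by metis
  have energy_lim: "(\<lambda>n. quadratic_energy (c n)) \<longlonglongrightarrow> Inf (quadratic_energy ` C)"
    using \<open>u \<longlonglongrightarrow> Inf (quadratic_energy ` C)\<close> by (simp add: u_eq[symmetric])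
  have "Cauchy (\<lambda>n. fst (c n))"
    using \<open>convex C\<close> bdd c energy_lim by (rule quadratic_energy_minimizing_sequence_Cauchy)
  then obtain w0 where w0: "(\<lambda>n. fst (c n)) \<longlonglongrightarrow> w0"
    using Cauchy_convergent_iff convergent_def by blast
  have "(\<lambda>n. quadratic_energy (c n) - (norm (fst (c n)))\<^sup>2)
      \<longlonglongrightarrow> Inf (quadratic_energy ` C) - (norm w0)\<^sup>2"
    by (intro tendsto_intros energy_lim w0)
  then have "(\<lambda>n. snd (c n)) \<longlonglongrightarrow> Inf (quadratic_energy ` C) - (norm w0)\<^sup>2"
    by (simp add: quadratic_energy_def)
  with c w0 show thesis by (rule that)
qed

lemma nonneg_if_nonneg_add_small:
  fixes d K :: real
  assumes "\<And>t. 0 < t \<Longrightarrow> t \<le> 1 \<Longrightarrow> 0 \<le> d + t * K"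
  shows "0 \<le> d"
proof -
  have "\<forall>k. 0 \<le> d + inverse (real (Suc k)) * K"
    using assms by (simp add: inverse_le_1_iff)
  moreover have "(\<lambda>k. d + inverse (real (Suc k)) * K) \<longlonglongrightarrow> d + 0 * K"
    by (intro tendsto_intros LIMSEQ_inverse_real_of_nat)
  ultimately show ?thesis
    by (simp add: LIMSEQ_le_const)
qed

(* The first-order optimality condition at the infimum, which need not be attained: w0 is the
   limit of the first components along a minimizing sequence. *)
lemma convex_quadratic_energy_affine_minorant:
  fixes C :: "('a::{real_inner,complete_space} \<times> real) set"
  assumes "convex C" and lower: "\<And>p. p \<in> C \<Longrightarrow> m \<le> quadratic_energy p"
  obtains w0 where "\<And>w s. (w, s) \<in> C \<Longrightarrow> m + (norm w0)\<^sup>2 \<le> s + 2 * inner w0 w"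
proof (cases "C = {}")
  case True
  then show thesis by (intro that) auto
next
  case False
  define \<mu> where "\<mu> = Inf (quadratic_energy ` C)"
  have bdd: "bdd_below (quadratic_energy ` C)"
    using lower by (rule bdd_belowI2)
  have "m \<le> \<mu>"
    unfolding \<mu>_def using False lower by (blast intro: cInf_greatest)
  obtain c w0 where c: "\<And>n. c n \<in> C" and w0: "(\<lambda>n. fst (c n)) \<longlonglongrightarrow> w0"
    and s_lim: "(\<lambda>n. snd (c n)) \<longlonglongrightarrow> \<mu> - (norm w0)\<^sup>2"
    using quadratic_energy_minimizing_sequence_converges[OF \<open>convex C\<close> False bdd]
    unfolding \<mu>_def by blast
  show thesis
  proof (rule that)
    fix w s assume "(w, s) \<in> C"
    define K where "K = (norm (w - w0))\<^sup>2"
    define d where "d = s + 2 * inner w0 w - (norm w0)\<^sup>2 - \<mu>"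
    have "0 \<le> d + t * K" if "0 < t" "t \<le> 1" for t
    proof -
      let ?E = "\<lambda>p. quadratic_energy ((1 - t) *\<^sub>R p + t *\<^sub>R (w, s))"
      have "\<mu> \<le> (1 - t) * (\<mu> - (norm w0)\<^sup>2) + t * s + (norm w0)\<^sup>2 + 2 * t * inner w0 (w - w0)
          + t\<^sup>2 * K"
      proof (rule LIMSEQ_le_const)
        show "(\<lambda>n. ?E (c n)) \<longlonglongrightarrow> (1 - t) * (\<mu> - (norm w0)\<^sup>2) + t * s + (norm w0)\<^sup>2
            + 2 * t * inner w0 (w - w0) + t\<^sup>2 * K"
          unfolding quadratic_energy_convex_comb K_def by (intro tendsto_intros s_lim w0) simp_all
        have "(1 - t) *\<^sub>R c n + t *\<^sub>R (w, s) \<in> C" for n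
          using \<open>convex C\<close> c \<open>(w, s) \<in> C\<close> that by (intro convexD) auto
        then show "\<exists>N. \<forall>n\<ge>N. \<mu> \<le> ?E (c n)"
          unfolding \<mu>_def using bdd by (auto intro: cInf_lower)
      qed
      also have "\<dots> = \<mu> + t * (d + t * K)"
        unfolding d_def by (simp add: inner_diff_right dot_square_norm algebra_simps power2_eq_square)
      finally show ?thesis
        using that by (simp add: zero_le_mult_iff)
    qed
    then have "0 \<le> d"
      by (rule nonneg_if_nonneg_add_small)
    then show "m + (norm w0)\<^sup>2 \<le> s + 2 * inner w0 w"
      using \<open>m \<le> \<mu>\<close> by (simp add: d_def)
  qed
qed

lemma monotone_op_convex_hull_lifted_graph:
  fixes M :: "'a::real_inner \<Rightarrow> 'a set"
  assumes mono: "monotone_op M"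
    and "(a, b, r) \<in> convex hull {(y, v, inner y v) | y v. v \<in> M y}"
  shows "inner a b \<le> r"
proof -
  define G :: "('a \<times> 'a \<times> real) set" where "G = {(y, v, inner y v) | y v. v \<in> M y}"
  \<comment> \<open>On lifted graph points h is the monotonicity expression; it is affine in each argument.\<close>
  define h :: "'a \<times> 'a \<times> real \<Rightarrow> 'a \<times> 'a \<times> real \<Rightarrow> real" where
    "h = (\<lambda>(a, b, r) (a', b', r'). r + r' - inner a b' - inner a' b)"
  have abr: "(a, b, r) \<in> convex hull G"
    using assms(2) by (simp add: G_def)
  have "0 \<le> h (a, b, r) (a, b, r)"
  proof (rule nonneg_on_convex_hull_symmetric[where h = h, OF _ _ _ abr abr])
    show "h p q = h q p" for p q
      by (simp add: h_def split_beta inner_commute)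
    show "convex {p. 0 \<le> h p q}" for q
      unfolding convex_alt
    proof (intro ballI allI impI)
      fix p p' :: "'a \<times> 'a \<times> real" and u :: real
      assume "p \<in> {p. 0 \<le> h p q}" "p' \<in> {p. 0 \<le> h p q}" "0 \<le> u \<and> u \<le> 1"
      moreover have "h ((1 - u) *\<^sub>R p + u *\<^sub>R p') q = (1 - u) * h p q + u * h p' q"
        by (simp add: h_def split_beta inner_add_left inner_add_right algebra_simps)
      ultimately show "(1 - u) *\<^sub>R p + u *\<^sub>R p' \<in> {p. 0 \<le> h p q}"
        by simp
    qed
    show "0 \<le> h p q" if in_G: "p \<in> G" "q \<in> G" for p q
    proof -
      obtain y v y' v' where "v \<in> M y" "v' \<in> M y'"
        and pq: "p = (y, v, inner y v)" "q = (y', v', inner y' v')"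
        using in_G by (auto simp: G_def)
      then have "0 \<le> inner (v - v') (y - y')"
        using mono by (blast intro: monotone_opD)
      then show ?thesis
        by (simp add: h_def pq inner_diff_left inner_diff_right inner_commute)
    qed
  qed
  then show ?thesis
    by (simp add: h_def inner_commute)
qed

theorem maximal_monotone_minty:
  fixes M :: "'a::{real_inner,complete_space} \<Rightarrow> 'a set"
  assumes max: "maximal_monotone M"
  shows "\<exists>z. -z \<in> M z"
proof -
  define G :: "('a \<times> 'a \<times> real) set" where "G = {(y, v, inner y v) | y v. v \<in> M y}"
  define C where "C = (\<lambda>(a, b, r). ((1 / 2) *\<^sub>R (a - b), r)) ` (convex hull G)"
  have "convex C"
    unfolding C_def
    by (intro convex_linear_image) (auto simp: linear_iff split_beta algebra_simps)
  moreover have "0 \<le> quadratic_energy p" if "p \<in> C" for p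
  proof -
    obtain a b r where abr: "(a, b, r) \<in> convex hull G" and p: "p = ((1 / 2) *\<^sub>R (a - b), r)"
      using \<open>p \<in> C\<close> by (auto simp: C_def)
    have "inner a b \<le> r"
      using monotone_op_convex_hull_lifted_graph[OF maximal_monotone_imp_monotone_op[OF max]] abr
      by (simp add: G_def)
    moreover have "quadratic_energy p = r - inner a b + (norm ((1 / 2) *\<^sub>R (a + b)))\<^sup>2"
      unfolding p quadratic_energy_def power2_norm_eq_inner
      by (simp add: inner_add_left inner_add_right inner_diff_left inner_diff_right
          inner_commute algebra_simps)
    ultimately show ?thesis
      by simp
  qed
  ultimately obtain w0 where w0: "\<And>w s. (w, s) \<in> C \<Longrightarrow> 0 + (norm w0)\<^sup>2 \<le> s + 2 * inner w0 w"
    by (rule convex_quadratic_energy_affine_minorant) auto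
  have "-w0 \<in> M w0"
  proof (rule maximal_monotone_memI[OF max])
    fix y v assume "v \<in> M y"
    then have "(y, v, inner y v) \<in> convex hull G"
      by (auto simp: G_def intro: hull_subset[THEN subsetD])
    then have "((1 / 2) *\<^sub>R (y - v), inner y v) \<in> C"
      unfolding C_def by force
    then have "(norm w0)\<^sup>2 \<le> inner y v + inner w0 (y - v)"
      using w0 by fastforce
    then show "0 \<le> inner (- w0 - v) (w0 - y)"
      by (simp add: inner_diff_left inner_diff_right dot_square_norm inner_commute)
  qed
  then show ?thesis by blast
qed

lemma resolvent_eqI:
  fixes B :: "'a::real_inner \<Rightarrow> 'a set"
  assumes mono: "monotone_op B" and "0 < l" and "u \<in> B x" and y: "y = x + l *\<^sub>R u"
  shows "resolvent l B y = x"
  unfolding resolvent_def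
proof (rule the_equality)
  show "y \<in> (\<lambda>u. x + l *\<^sub>R u) ` B x"
    using assms by blast
next
  fix x' assume "y \<in> (\<lambda>u. x' + l *\<^sub>R u) ` B x'"
  then obtain u' where "u' \<in> B x'" and y': "y = x' + l *\<^sub>R u'" by blast
  have "0 \<le> inner (u' - u) (x' - x)"
    using mono \<open>u' \<in> B x'\<close> \<open>u \<in> B x\<close> by (rule monotone_opD)
  also have "x' - x = - l *\<^sub>R (u' - u)"
    using y y' by (simp add: algebra_simps)
  finally have "(norm (u' - u))\<^sup>2 \<le> 0"
    using \<open>0 < l\<close> by (simp add: dot_square_norm mult_le_0_iff)
  then have "u' = u" by simp
  then show "x' = x" using y y' by simp
qed

lemma resolvent_mem:
  fixes B :: "'a::{real_inner,complete_space} \<Rightarrow> 'a set"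
  assumes max: "maximal_monotone B" and "0 < l"
  shows "(1 / l) *\<^sub>R (y - resolvent l B y) \<in> B (resolvent l B y)"
proof -
  obtain z where "-z \<in> (*\<^sub>R) l ` B (z + y)"
    using maximal_monotone_minty[OF maximal_monotone_translate_scale[OF max \<open>0 < l\<close>]] by blast
  then obtain u where u: "u \<in> B (z + y)" and "-z = l *\<^sub>R u" by blast
  then have y: "y = (z + y) + l *\<^sub>R u" by (metis add.commute add_minus_cancel)
  then have "resolvent l B y = z + y"
    using max \<open>0 < l\<close> u by (blast intro: resolvent_eqI maximal_monotone_imp_monotone_op)
  moreover have "(1 / l) *\<^sub>R (y - (z + y)) = u"
    using \<open>-z = l *\<^sub>R u\<close> \<open>0 < l\<close> by simp
  ultimately show ?thesis
    using u by simp
qed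

lemma uniformly_continuous_on_UNIV_affine_bound:
  fixes f :: "'a::real_normed_vector \<Rightarrow> 'b::real_normed_vector"
  assumes "uniformly_continuous_on UNIV f"
  obtains \<rho> where "0 < \<rho>" and "\<And>a b. norm (f b - f a) \<le> norm (b - a) / \<rho> + 1"
proof -
  obtain \<rho> where "0 < \<rho>" and \<rho>: "\<And>a b. dist b a < \<rho> \<Longrightarrow> dist (f b) (f a) < 1"
    using assms by (metis uniformly_continuous_onE UNIV_I zero_less_one)
  have "norm (f b - f a) \<le> norm (b - a) / \<rho> + 1" for a b
  proof -
    define n where "n = nat \<lfloor>norm (b - a) / \<rho>\<rfloor> + 1"
    define p where "p k = a + (real k / real n) *\<^sub>R (b - a)" for k
    have "0 \<le> norm (b - a) / \<rho>"
      using \<open>0 < \<rho>\<close> by simp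
    then have n_bounds: "norm (b - a) / \<rho> < real n" "real n \<le> norm (b - a) / \<rho> + 1"
      unfolding n_def by linarith+
    have "0 < real n"
      by (simp add: n_def)
    with n_bounds(1) \<open>0 < \<rho>\<close> have "norm (b - a) / real n < \<rho>"
      by (simp add: field_simps)
    moreover have "dist (p (Suc k)) (p k) = norm (b - a) / real n" for k
    proof -
      have "p (Suc k) - p k = (1 / real n) *\<^sub>R (b - a)"
        by (simp add: p_def add_divide_distrib scaleR_add_left)
      then show ?thesis
        by (simp add: dist_norm)
    qed
    ultimately have "dist (p (Suc k)) (p k) < \<rho>" for k
      by simp
    then have step: "norm (f (p (Suc k)) - f (p k)) \<le> 1" for k
      using \<rho> by (simp add: dist_norm less_imp_le)
    have "p n = b" "p 0 = a"
      using \<open>0 < real n\<close> by (simp_all add: p_def)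
    then have "f b - f a = (\<Sum>k<n. f (p (Suc k)) - f (p k))"
      using sum_lessThan_telescope[of "\<lambda>k. f (p k)" n] by simp
    then have "norm (f b - f a) \<le> real n"
      using sum_norm_le[of "{..<n}", OF step] by simp
    with n_bounds(2) show ?thesis by linarith
  qed
  with \<open>0 < \<rho>\<close> show thesis by (rule that)
qed

lemma uniformly_continuous_step_tendsto:
  fixes f :: "'a::real_normed_vector \<Rightarrow> 'b::real_normed_vector"
  assumes f: "uniformly_continuous_on UNIV f" and "\<gamma> \<longlonglongrightarrow> 0" and "\<And>j. 0 < \<gamma> j" and "0 < \<delta>"
    and step: "\<And>j. \<delta> * norm (x - y j) \<le> \<gamma> j * norm (f x - f (y j))"
  shows "y \<longlonglongrightarrow> x"
proof -
  obtain \<rho> where "0 < \<rho>" and \<rho>: "\<And>a b. norm (f b - f a) \<le> norm (b - a) / \<rho> + 1"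
    using uniformly_continuous_on_UNIV_affine_bound[OF f] by blast
  have "\<forall>\<^sub>F j in sequentially. \<gamma> j < \<rho> * \<delta> / 2"
    using order_tendstoD(2)[OF \<open>\<gamma> \<longlonglongrightarrow> 0\<close>, of "\<rho> * \<delta> / 2"] \<open>0 < \<rho>\<close> \<open>0 < \<delta>\<close> by simp
  then have bound: "\<forall>\<^sub>F j in sequentially. norm (x - y j) \<le> 2 / \<delta> * \<gamma> j"
  proof (rule eventually_mono)
    fix j assume small: "\<gamma> j < \<rho> * \<delta> / 2"
    have "\<gamma> j * norm (f x - f (y j)) \<le> \<gamma> j * (norm (x - y j) / \<rho> + 1)"
      using \<rho>[of x "y j"] \<open>0 < \<gamma> j\<close> by (simp add: mult_left_mono)
    with step[of j] have "\<delta> * norm (x - y j) \<le> \<gamma> j / \<rho> * norm (x - y j) + \<gamma> j"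
      by (simp add: algebra_simps)
    moreover have "\<gamma> j / \<rho> * norm (x - y j) \<le> \<delta> / 2 * norm (x - y j)"
      using small \<open>0 < \<rho>\<close> by (intro mult_right_mono) (simp_all add: pos_divide_le_eq mult.commute)
    ultimately have "\<delta> * norm (x - y j) \<le> 2 * \<gamma> j"
      by linarith
    then show "norm (x - y j) \<le> 2 / \<delta> * \<gamma> j"
      using \<open>0 < \<delta>\<close> by (simp add: pos_le_divide_eq mult.commute)
  qed
  have "(\<lambda>j. norm (x - y j)) \<longlonglongrightarrow> 0"
    by (rule tendsto_sandwich[OF _ bound tendsto_const
          tendsto_mult_right_zero[OF \<open>\<gamma> \<longlonglongrightarrow> 0\<close>]]) simp
  then have "(\<lambda>j. x - (x - y j)) \<longlonglongrightarrow> x - 0"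
    by (intro tendsto_diff tendsto_const) (simp add: tendsto_norm_zero_iff)
  then show ?thesis
    by simp
qed

lemma uniformly_continuous_scaled_step_tendsto_zero:
  fixes f :: "'a::real_normed_vector \<Rightarrow> 'b::real_normed_vector"
  assumes f: "uniformly_continuous_on UNIV f" and "\<gamma> \<longlonglongrightarrow> 0" and "\<And>j. 0 < \<gamma> j" and "0 < \<delta>"
    and step: "\<And>j. \<delta> * norm (x - y j) \<le> \<gamma> j * norm (f x - f (y j))"
  shows "(\<lambda>j. (1 / \<gamma> j) *\<^sub>R (x - y j)) \<longlonglongrightarrow> 0"
proof -
  have "y \<longlonglongrightarrow> x"
    using assms by (rule uniformly_continuous_step_tendsto)
  then have "(\<lambda>j. f (y j)) \<longlonglongrightarrow> f x"
    using continuous_on_tendsto_compose[OF uniformly_continuous_imp_continuous[OF f]] by simp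
  then have "(\<lambda>j. f x - f (y j)) \<longlonglongrightarrow> f x - f x"
    by (intro tendsto_diff tendsto_const)
  then have increment_lim: "(\<lambda>j. norm (f x - f (y j)) / \<delta>) \<longlonglongrightarrow> 0"
    by (intro tendsto_divide_zero tendsto_norm_zero) simp
  have quotient_bound: "\<forall>j. norm ((1 / \<gamma> j) *\<^sub>R (x - y j)) \<le> norm (f x - f (y j)) / \<delta>"
  proof
    fix j
    have "norm ((1 / \<gamma> j) *\<^sub>R (x - y j)) = norm (x - y j) / \<gamma> j"
      using \<open>0 < \<gamma> j\<close> by simp
    also have "\<dots> \<le> norm (f x - f (y j)) / \<delta>"
      using step[of j] \<open>0 < \<gamma> j\<close> \<open>0 < \<delta>\<close> by (simp add: field_simps mult.commute)
    finally show "norm ((1 / \<gamma> j) *\<^sub>R (x - y j)) \<le> norm (f x - f (y j)) / \<delta>" .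
  qed
  have "(\<lambda>j. norm ((1 / \<gamma> j) *\<^sub>R (x - y j))) \<longlonglongrightarrow> 0"
    by (rule tendsto_sandwich[OF _ always_eventually[OF quotient_bound] tendsto_const
          increment_lim]) simp
  then show ?thesis
    by (rule tendsto_norm_zero_cancel)
qed

lemma norm_less_of_norm_sq_less_inner:
  fixes v w :: "'a::real_inner"
  assumes less: "\<delta> * (norm v)\<^sup>2 < l * inner w v" and "0 \<le> l"
  shows "\<delta> * norm v < l * norm w"
proof -
  have "v \<noteq> 0"
    using less by auto
  have "(\<delta> * norm v) * norm v < l * inner w v"
    using less by (simp add: power2_eq_square mult.assoc)
  also have "\<dots> \<le> (l * norm w) * norm v"
    using \<open>0 \<le> l\<close> by (simp add: mult.assoc mult_left_mono norm_cauchy_schwarz)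
  finally show ?thesis
    using \<open>v \<noteq> 0\<close> by (simp add: mult_less_cancel_right)
qed

lemma resolvent_backtracking_terminates:
  fixes B :: "'a::{real_inner,complete_space} \<Rightarrow> 'a set" and f :: "'a \<Rightarrow> 'a"
  assumes max: "maximal_monotone B" and f: "uniformly_continuous_on UNIV f"
    and \<gamma>: "\<gamma> \<longlonglongrightarrow> 0" "\<And>j. 0 < \<gamma> j" and "0 < \<delta>"
  shows "\<exists>j. let xb = resolvent (\<gamma> j) B (x - \<gamma> j *\<^sub>R a)
    in \<gamma> j * inner (f x - f xb) (x - xb) \<le> \<delta> * (norm (x - xb))\<^sup>2"
proof (rule ccontr)
  define y where "y j = resolvent (\<gamma> j) B (x - \<gamma> j *\<^sub>R a)" for j
  assume "\<not> ?thesis"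
  then have fails: "\<delta> * (norm (x - y j))\<^sup>2 < \<gamma> j * inner (f x - f (y j)) (x - y j)" for j
    by (simp add: y_def Let_def not_le)
  have step: "\<delta> * norm (x - y j) \<le> \<gamma> j * norm (f x - f (y j))" for j
    using norm_less_of_norm_sq_less_inner[OF fails] \<gamma>(2) by (simp add: less_imp_le)
  have y_lim: "y \<longlonglongrightarrow> x"
    using f \<gamma> \<open>0 < \<delta>\<close> step by (rule uniformly_continuous_step_tendsto)
  have quotient_lim: "(\<lambda>j. (1 / \<gamma> j) *\<^sub>R (x - y j)) \<longlonglongrightarrow> 0"
    using f \<gamma> \<open>0 < \<delta>\<close> step by (rule uniformly_continuous_scaled_step_tendsto_zero)
  have "(1 / \<gamma> j) *\<^sub>R (x - y j) - a \<in> B (y j)" for j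
    using resolvent_mem[OF max \<gamma>(2), of j "x - \<gamma> j *\<^sub>R a"] \<gamma>(2)[of j]
    by (simp add: y_def scaleR_diff_right algebra_simps)
  moreover have "(\<lambda>j. (1 / \<gamma> j) *\<^sub>R (x - y j) - a) \<longlonglongrightarrow> -a"
    using tendsto_diff[OF quotient_lim tendsto_const[of a]] by simp
  ultimately have "-a \<in> B x"
    by (rule maximal_monotone_closed_graph[OF max _ y_lim])
  then have "y 0 = x"
    unfolding y_def using max \<gamma>(2)
    by (intro resolvent_eqI[where u = "-a"]) (simp_all add: maximal_monotone_imp_monotone_op)
  then show False
    using fails[of 0] by simp
qed

theorem proposition4p1:
  fixes A1 A2 :: "'a::{real_inner, complete_space} \<Rightarrow> 'a"
    and B :: "'a \<Rightarrow> 'a set"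
    and \<beta> \<theta> \<delta> \<alpha> :: real and x :: 'a
  assumes "\<beta> > 0" and "cocoercive \<beta> A1"
    and "maximal_monotone (\<lambda>y. {A2 y})" and "uniformly_continuous_on UNIV A2"
    and "maximal_monotone B"
    and "zer (\<lambda>y. A1 y + A2 y) B \<noteq> {}"
    and "0 < \<theta>" "\<theta> < 1" "0 < \<delta>" "\<delta> < 1" "\<alpha> > 0"
  shows "\<exists>j::nat.
    (let xb = resolvent (\<alpha> * \<theta> ^ j) B (x - (\<alpha> * \<theta> ^ j) *\<^sub>R (A1 x + A2 x))
     in \<alpha> * \<theta> ^ j * inner (A2 x - A2 xb) (x - xb) \<le> \<delta> * (norm (x - xb))\<^sup>2)"
proof -
  have "(\<lambda>j. \<alpha> * \<theta> ^ j) \<longlonglongrightarrow> 0"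
    using \<open>0 < \<theta>\<close> \<open>\<theta> < 1\<close> by (intro tendsto_mult_right_zero LIMSEQ_power_zero) simp
  moreover have "0 < \<alpha> * \<theta> ^ j" for j
    using \<open>\<alpha> > 0\<close> \<open>0 < \<theta>\<close> by simp
  ultimately show ?thesis
    using resolvent_backtracking_terminates[OF \<open>maximal_monotone B\<close>
        \<open>uniformly_continuous_on UNIV A2\<close> _ _ \<open>0 < \<delta>\<close>]
    by blast
qed

end
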